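(* Let $w_1,b_1,w_2,b_2$ be the four vertices, in cyclic order, of a face of $\overline G$, where $w_1,w_2$ are white and $b_1,b_2$ black, and set $w_3=w_1$. Then $$(-1)\prod_{i=1}^2\frac{\overline\partial(w_i,b_i)}{\overline\partial(b_i,w_{i+1})}>0.$$
   Context: $G=(V,E)$ is an infinite connected graph properly embedded in the hyperbolic plane (unit disk) with every face bounded and finite, with weights $\nu(e)>0$; $G^+=(V^+,E^+)$ is its dual with weights $\nu(f)>0$; $e^+$ denotes the dual of $e$. The embedding places each dual vertex inside its face, draws edges as Euclidean segments, and makes each pair $e,e^+$ perpendicular. $\overline G$ is the bipartite graph with black vertices $V\cup V^+$ and white vertices the crossing points $e\cap e^+$, a white vertex adjacent to the endpoints of $e$ and of $e^+$ (so faces of $\overline G$ are quadrilaterals). The matrix $\overline\partial$ on vertices of $\overline G$: $\overline\partial(u,v)=0$ if $u,v$ not adjacent; for adjacent white $w$ and black $b$, with $f$ the edge of $G$ or $G^+$ having $b$ as an endpoint and containing $w$, $\overline\partial(w,b)=\overline\partial(b,w)=\nu(f)\frac{b-w}{|b-w|}$ (points as complex numbers). *)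

theory Defs
  imports "HOL-Analysis.Analysis"
begin

text \<open>Points of the hyperbolic plane (Poincare unit disk model) are complex
numbers in ball 0 1. Since edges are drawn as Euclidean segments, an edge is the
2-element set of its endpoints; its drawing is the convex hull of that set.\<close>

definition drawing :: "complex set \<Rightarrow> complex set set \<Rightarrow> complex set" where
  "drawing V E = V \<union> \<Union> ((\<lambda>e. convex hull e) ` E)"

definition edge_interior :: "complex set \<Rightarrow> complex set" where
  "edge_interior e = convex hull e - e"

definition plane_straight :: "complex set \<Rightarrow> complex set set \<Rightarrow> bool" where
  "plane_straight V E \<longleftrightarrow>
     V \<subseteq> ball 0 1 \<and>
     (\<forall>e\<in>E. e \<subseteq> V \<and> card e = 2) \<and>
     (\<forall>e\<in>E. \<forall>e'\<in>E. e \<noteq> e' \<longrightarrow> convex hull e \<inter> convex hull e' = e \<inter> e') \<and>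
     (\<forall>v\<in>V. \<forall>e\<in>E. v \<in> convex hull e \<longrightarrow> v \<in> e) \<and>
     (\<forall>K. compact K \<and> K \<subseteq> ball 0 1 \<longrightarrow>
          finite {v\<in>V. v \<in> K} \<and> finite {e\<in>E. convex hull e \<inter> K \<noteq> {}})"

definition graph_connected :: "complex set \<Rightarrow> complex set set \<Rightarrow> bool" where
  "graph_connected V E \<longleftrightarrow> (\<forall>u\<in>V. \<forall>v\<in>V. (u, v) \<in> {(a, b). {a, b} \<in> E}\<^sup>*)"

definition faces :: "complex set \<Rightarrow> complex set set \<Rightarrow> complex set set" where
  "faces V E = components (ball 0 1 - drawing V E)"

text \<open>The standing setting: G = (V,E) with dual G+ = (Vp, dl ` E); fv maps each face of G
to its dual vertex, dl maps each edge e to its dual edge e+, nu are the weights.\<close>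
definition dual_setting ::
  "complex set \<Rightarrow> complex set set \<Rightarrow> complex set \<Rightarrow> (complex set \<Rightarrow> complex set)
    \<Rightarrow> (complex set \<Rightarrow> complex) \<Rightarrow> (complex set \<Rightarrow> real) \<Rightarrow> bool" where
  "dual_setting V E Vp dl fv nu \<longleftrightarrow>
     plane_straight V E \<and> infinite V \<and> graph_connected V E \<and>
     (\<forall>F\<in>faces V E. closure F \<subseteq> ball 0 1 \<and> finite {e\<in>E. convex hull e \<inter> closure F \<noteq> {}}) \<and>
     bij_betw fv (faces V E) Vp \<and> (\<forall>F\<in>faces V E. fv F \<in> F) \<and>
     inj_on dl E \<and>
     (\<forall>e\<in>E. dl e = fv ` {F\<in>faces V E. edge_interior e \<inter> closure F \<noteq> {}}) \<and>
     plane_straight Vp (dl ` E) \<and>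
     (\<forall>e\<in>E. \<exists>p. p \<in> edge_interior e \<and> p \<in> edge_interior (dl e) \<and>
                 convex hull e \<inter> drawing Vp (dl ` E) = {p} \<and>
                 convex hull (dl e) \<inter> drawing V E = {p}) \<and>
     (\<forall>e\<in>E. \<forall>a b c d. e = {a, b} \<longrightarrow> dl e = {c, d} \<longrightarrow> Re ((b - a) * cnj (d - c)) = 0) \<and>
     (\<forall>e\<in>E. nu e > 0 \<and> nu (dl e) > 0)"

text \<open>White vertices of G-bar: crossing points of e and e+.\<close>
definition whites :: "complex set set \<Rightarrow> (complex set \<Rightarrow> complex set) \<Rightarrow> complex set" where
  "whites E dl = {p. \<exists>e\<in>E. convex hull e \<inter> convex hull (dl e) = {p}}"

definition adj_wb :: "complex set set \<Rightarrow> (complex set \<Rightarrow> complex set) \<Rightarrow> complex \<Rightarrow> complex \<Rightarrow> bool" where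
  "adj_wb E dl w b \<longleftrightarrow> w \<in> whites E dl \<and>
     (\<exists>f\<in>E \<union> dl ` E. b \<in> f \<and> w \<in> convex hull f)"

definition edge_wb :: "complex set set \<Rightarrow> (complex set \<Rightarrow> complex set) \<Rightarrow> complex \<Rightarrow> complex \<Rightarrow> complex set" where
  "edge_wb E dl w b = (THE f. f \<in> E \<union> dl ` E \<and> b \<in> f \<and> w \<in> convex hull f)"

definition dbar :: "complex set set \<Rightarrow> (complex set \<Rightarrow> complex set) \<Rightarrow> (complex set \<Rightarrow> real)
    \<Rightarrow> complex \<Rightarrow> complex \<Rightarrow> complex" where
  "dbar E dl nu u v =
     (if adj_wb E dl u v then
        of_real (nu (edge_wb E dl u v)) * (v - u) / of_real (cmod (v - u))
      else if adj_wb E dl v u then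
        of_real (nu (edge_wb E dl v u)) * (u - v) / of_real (cmod (u - v))
      else 0)"

text \<open>Faces of G-bar: its drawing is the union of the drawings of G and G+.\<close>
definition gbar_faces :: "complex set \<Rightarrow> complex set set \<Rightarrow> complex set \<Rightarrow> (complex set \<Rightarrow> complex set) \<Rightarrow> complex set set" where
  "gbar_faces V E Vp dl = components (ball 0 1 - (drawing V E \<union> drawing Vp (dl ` E)))"

end

theory Submission
  imports Defs
begin

text \<open>A white vertex w is the crossing point of an edge e of G with its dual edge e+, and
these are perpendicular. Around a face w1 b1 w2 b2 of G-bar one black vertex is a common
endpoint of e1 and e2, the other a common endpoint of e1+ and e2+. So the angles at w1 and w2
are right angles and, by Thales, all four points lie on the circle with diameter b1 b2;
planarity keeps the segments b1 w2 and w1 b2 (and b1 w1 and w2 b2) apart, which puts w1 and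
w2 on opposite arcs. The product in question is a positive multiple of minus the cross ratio
(b1, b2; w1, w2), and the cross ratio of such a configuration is a negative real.\<close>

text \<open>Twice the signed area of the triangle a b c; positive iff a, b, c run counterclockwise.\<close>

definition orient :: "complex \<Rightarrow> complex \<Rightarrow> complex \<Rightarrow> real" where
  "orient a b c = Im (cnj (b - a) * (c - a))"

lemma closed_segments_intersect_if_straddle:
  assumes "orient p q r > 0" "orient p q s < 0" "orient r s p < 0" "orient r s q > 0"
  shows "closed_segment p q \<inter> closed_segment r s \<noteq> {}"
proof -
  define l where "l = orient r s p / (orient r s p - orient r s q)"
  define m where "m = orient p q r / (orient p q r - orient p q s)"
  have "0 \<le> l" "l \<le> 1" "0 \<le> m" "m \<le> 1"
    using assms by (auto simp: l_def m_def divide_simps)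
  moreover have "(1 - l) *\<^sub>R p + l *\<^sub>R q = (1 - m) *\<^sub>R r + m *\<^sub>R s"
    using assms unfolding l_def m_def
    by (simp add: complex_eq_iff orient_def field_simps)
  ultimately show ?thesis
    by (metis disjoint_iff in_segment(1))
qed

lemma unit_circle_chords_intersect:
  fixes u v :: complex
  assumes "cmod u = 1" "cmod v = 1" "Im u * Im v > 0" "Re v < Re u"
  shows "closed_segment (-1) u \<inter> closed_segment v 1 \<noteq> {}"
proof -
  have upper: "closed_segment (-1) u \<inter> closed_segment v 1 \<noteq> {}"
    if "cmod u = 1" "cmod v = 1" "Im u > 0" "Im v > 0" "Re v < Re u" for u v :: complex
  proof -
    have circle: "(Re u)\<^sup>2 + (Im u)\<^sup>2 = 1" "(Re v)\<^sup>2 + (Im v)\<^sup>2 = 1"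
      using that(1,2) cmod_power2[of u] cmod_power2[of v] by auto
    have "(Re u)\<^sup>2 < 1" "(Re v)\<^sup>2 < 1"
      using circle zero_less_power[OF that(3), of 2] zero_less_power[OF that(4), of 2] by linarith+
    then have "\<bar>Re u\<bar> < 1" "\<bar>Re v\<bar> < 1"
      by (simp_all add: abs_square_less_1)
    have "((Re u + 1) * Im v)\<^sup>2 - (Im u * (Re v + 1))\<^sup>2 = (Re u + 1) * (Re v + 1) * (2 * (Re u - Re v))"
      "(Im u * (1 - Re v))\<^sup>2 - (Im v * (1 - Re u))\<^sup>2 = (1 - Re u) * (1 - Re v) * (2 * (Re u - Re v))"
      using circle by algebra+
    moreover have "(Re u + 1) * (Re v + 1) * (2 * (Re u - Re v)) > 0"
      "(1 - Re u) * (1 - Re v) * (2 * (Re u - Re v)) > 0"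
      using that(5) \<open>\<bar>Re u\<bar> < 1\<close> \<open>\<bar>Re v\<bar> < 1\<close> by (simp_all add: abs_less_iff)
    ultimately have sq: "(Im u * (Re v + 1))\<^sup>2 < ((Re u + 1) * Im v)\<^sup>2"
      "(Im v * (1 - Re u))\<^sup>2 < (Im u * (1 - Re v))\<^sup>2"
      by linarith+
    have "0 \<le> (Re u + 1) * Im v" "0 \<le> Im u * (1 - Re v)"
      using that(3,4) \<open>\<bar>Re u\<bar> < 1\<close> \<open>\<bar>Re v\<bar> < 1\<close> by (simp_all add: abs_less_iff)
    then have "Im u * (Re v + 1) < (Re u + 1) * Im v" "Im v * (1 - Re u) < Im u * (1 - Re v)"
      using power2_less_imp_less sq by blast+
    then show ?thesis
      using that(3,4)
      by (intro closed_segments_intersect_if_straddle) (auto simp: orient_def algebra_simps)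
  qed
  show ?thesis
  proof (cases "Im u > 0")
    case True
    then show ?thesis
      using assms upper by (simp add: zero_less_mult_iff)
  next
    case False
    have "closed_segment (-1) (cnj u) \<inter> closed_segment (cnj v) 1 \<noteq> {}"
      using assms False by (intro upper) (auto simp: zero_less_mult_iff)
    moreover have "closed_segment (cnj a) (cnj b) = cnj ` closed_segment a b" for a b
      by (intro closed_segment_linear_image bounded_linear.linear bounded_linear_cnj)
    then have "closed_segment (-1) u = cnj ` closed_segment (-1) (cnj u)"
      "closed_segment v 1 = cnj ` closed_segment (cnj v) 1"
      by (metis complex_cnj_cnj complex_cnj_minus complex_cnj_one)+
    ultimately show ?thesis
      by blast
  qed
qed

lemma unit_circle_points_separated:
  fixes u v :: complex
  assumes "cmod u = 1" "cmod v = 1" "u \<noteq> v" "u \<notin> {-1, 1}" "v \<notin> {-1, 1}"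
    and "closed_segment (-1) u \<inter> closed_segment v 1 = {}"
    and "closed_segment (-1) v \<inter> closed_segment u 1 = {}"
  shows "Im u * Im v < 0"
proof -
  have circle: "(Re u)\<^sup>2 + (Im u)\<^sup>2 = 1" "(Re v)\<^sup>2 + (Im v)\<^sup>2 = 1"
    using assms(1,2) cmod_power2[of u] cmod_power2[of v] by auto
  have "Im z \<noteq> 0" if "(Re z)\<^sup>2 + (Im z)\<^sup>2 = 1" "z \<notin> {-1, 1}" for z
    using that by (auto simp: power2_eq_1_iff complex_eq_iff)
  then have "Im u \<noteq> 0" "Im v \<noteq> 0"
    using circle assms(4,5) by blast+
  show ?thesis
  proof (rule ccontr)
    assume "\<not> Im u * Im v < 0"
    then have same_side: "Im u * Im v > 0"
      using \<open>Im u \<noteq> 0\<close> \<open>Im v \<noteq> 0\<close> by (simp add: linorder_not_less order_le_less)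
    have "Re u \<noteq> Re v"
    proof
      assume "Re u = Re v"
      then have "(Im u)\<^sup>2 = (Im v)\<^sup>2"
        using circle by simp
      then have "Im u = Im v \<or> Im u = - Im v"
        by (simp add: power2_eq_iff)
      then show False
        using same_side assms(3) \<open>Re u = Re v\<close> by (auto simp: complex_eq_iff mult_less_0_iff)
    qed
    then show False
      using unit_circle_chords_intersect[OF assms(1,2) same_side]
        unit_circle_chords_intersect[OF assms(2,1) _] same_side assms(6,7)
      by (metis linorder_neqE_linordered_idom mult.commute)
  qed
qed

definition cross_ratio :: "complex \<Rightarrow> complex \<Rightarrow> complex \<Rightarrow> complex \<Rightarrow> complex" where
  "cross_ratio a b c d = (a - c) * (b - d) / ((a - d) * (b - c))"

lemma cross_ratio_affine:
  assumes "\<alpha> \<noteq> 0"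
  shows "cross_ratio (\<alpha> * a + \<beta>) (\<alpha> * b + \<beta>) (\<alpha> * c + \<beta>) (\<alpha> * d + \<beta>) = cross_ratio a b c d"
  using assms by (simp add: cross_ratio_def mult_ac flip: right_diff_distrib)

lemma cross_ratio_unit_circle:
  fixes u v :: complex
  assumes "cmod u = 1" "cmod v = 1" "v \<noteq> -1" "Im u * Im v < 0"
  shows "\<exists>r<0. cross_ratio (-1) 1 u v = of_real r"
proof -
  define p where "p = (-1 - u) * (1 - v)"
  define q where "q = (-1 - v) * (1 - u)"
  have circle: "(Re u)\<^sup>2 + (Im u)\<^sup>2 = 1" "(Re v)\<^sup>2 + (Im v)\<^sup>2 = 1"
    using assms(1,2) cmod_power2[of u] cmod_power2[of v] by auto
  have "p * cnj q = of_real (4 * Im u * Im v)"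
    unfolding p_def q_def using circle by (simp add: complex_eq_iff) algebra
  moreover have "q \<noteq> 0"
    using assms(3,4) by (auto simp: q_def)
  ultimately have "cross_ratio (-1) 1 u v = of_real (4 * Im u * Im v / (cmod q)\<^sup>2)"
    by (simp add: cross_ratio_def complex_div_cnj[of p q] flip: p_def q_def)
  moreover have "4 * Im u * Im v / (cmod q)\<^sup>2 < 0"
    using assms(4) \<open>q \<noteq> 0\<close> by (simp add: divide_neg_pos)
  ultimately show ?thesis
    by blast
qed

lemma closed_segment_affine_image:
  fixes \<alpha> \<beta> p q :: complex
  shows "closed_segment (\<alpha> * p + \<beta>) (\<alpha> * q + \<beta>) = (\<lambda>z. \<alpha> * z + \<beta>) ` closed_segment p q"
  using closed_segment_translation[of \<beta> "\<alpha> * p" "\<alpha> * q"]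
    closed_segment_linear_image[of "(*) \<alpha>" p q]
  by (simp add: image_image add.commute linear_times)

lemma thales_unit_circle:
  fixes a b w :: complex
  assumes "a \<noteq> b" "Re ((a - w) * cnj (b - w)) = 0"
  shows "cmod ((2 * w - a - b) / (b - a)) = 1"
proof -
  have "(cmod (2 * w - a - b))\<^sup>2 = (cmod (b - a))\<^sup>2"
    using assms(2) unfolding cmod_power2 by simp algebra
  then show ?thesis
    using assms(1) by (simp add: norm_divide power2_eq_iff_nonneg)
qed

lemma cross_ratio_negative_if_right_angles:
  fixes a b w1 w2 :: complex
  assumes "a \<noteq> b" "w1 \<noteq> w2" "w1 \<notin> {a, b}" "w2 \<notin> {a, b}"
    and "Re ((a - w1) * cnj (b - w1)) = 0" "Re ((a - w2) * cnj (b - w2)) = 0"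
    and "closed_segment a w1 \<inter> closed_segment w2 b = {}"
    and "closed_segment a w2 \<inter> closed_segment w1 b = {}"
  shows "\<exists>r<0. cross_ratio a b w1 w2 = of_real r"
proof -
  define \<alpha> where "\<alpha> = 2 / (b - a)"
  define \<beta> where "\<beta> = - (a + b) / (b - a)"
  define f where "f = (\<lambda>z. \<alpha> * z + \<beta>)"
  \<comment> \<open>f sends a, b to -1, 1 and, by Thales, w1, w2 to the unit circle.\<close>
  have "\<alpha> \<noteq> 0"
    using assms(1) by (simp add: \<alpha>_def)
  then have "inj f"
    by (auto simp: inj_on_def f_def)
  have f_eq: "f w = (2 * w - a - b) / (b - a)" for w
    unfolding f_def \<alpha>_def \<beta>_def by (simp add: diff_divide_distrib add_divide_distrib)
  have ends: "f a = -1" "f b = 1"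
    using assms(1) unfolding f_eq by (simp_all add: field_simps)
  have unit: "cmod (f w1) = 1" "cmod (f w2) = 1"
    using thales_unit_circle assms(1,5,6) by (simp_all add: f_eq)
  have distinct: "f w1 \<noteq> f w2" "f w1 \<notin> {f a, f b}" "f w2 \<notin> {f a, f b}"
    using \<open>inj f\<close> assms(2-4) by (auto dest: injD)
  have "closed_segment (f p) (f q) = f ` closed_segment p q" for p q
    unfolding f_def by (rule closed_segment_affine_image)
  then have "closed_segment (f a) (f w1) \<inter> closed_segment (f w2) (f b) = {}"
    "closed_segment (f a) (f w2) \<inter> closed_segment (f w1) (f b) = {}"
    using assms(7,8) by (simp_all flip: image_Int[OF \<open>inj f\<close>])
  then have "Im (f w1) * Im (f w2) < 0"
    using unit_circle_points_separated[OF unit] distinct unfolding ends by blast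
  then obtain r where "r < 0" "cross_ratio (f a) (f b) (f w1) (f w2) = of_real r"
    using cross_ratio_unit_circle[OF unit] distinct(3) unfolding ends by blast
  moreover have "cross_ratio (f a) (f b) (f w1) (f w2) = cross_ratio a b w1 w2"
    unfolding f_def by (rule cross_ratio_affine[OF \<open>\<alpha> \<noteq> 0\<close>])
  ultimately show ?thesis
    by auto
qed

lemma card_2_eq_doubleton:
  assumes "card A = 2" "a \<in> A" "b \<in> A" "a \<noteq> b"
  shows "A = {a, b}"
proof -
  have "{a, b} \<subseteq> A" "finite A"
    using assms card.infinite by fastforce+
  moreover have "card {a, b} = card A"
    using assms(1,4) by simp
  ultimately show ?thesis
    using card_subset_eq by metis
qed

lemma dual_settingD:
  assumes "dual_setting V E Vp dl fv nu"
  shows "plane_straight V E" "plane_straight Vp (dl ` E)" "inj_on dl E"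
    and "Vp = fv ` faces V E" "\<And>F. F \<in> faces V E \<Longrightarrow> fv F \<in> F"
    and "\<And>e. e \<in> E \<Longrightarrow> \<exists>p. p \<in> edge_interior e \<and> p \<in> edge_interior (dl e) \<and>
                 convex hull (dl e) \<inter> drawing V E = {p}"
    and "\<And>e a b c d. e \<in> E \<Longrightarrow> e = {a, b} \<Longrightarrow> dl e = {c, d} \<Longrightarrow> Re ((b - a) * cnj (d - c)) = 0"
    and "\<And>e. e \<in> E \<Longrightarrow> nu e > 0 \<and> nu (dl e) > 0"
  using assms unfolding dual_setting_def bij_betw_def by (elim conjE; metis)+

lemma plane_straightD:
  assumes "plane_straight V E"
  shows "\<And>e. e \<in> E \<Longrightarrow> e \<subseteq> V \<and> card e = 2"
    and "\<And>e e'. e \<in> E \<Longrightarrow> e' \<in> E \<Longrightarrow> e \<noteq> e' \<Longrightarrow> convex hull e \<inter> convex hull e' = e \<inter> e'"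
    and "\<And>v e. v \<in> V \<Longrightarrow> e \<in> E \<Longrightarrow> v \<in> convex hull e \<Longrightarrow> v \<in> e"
  using assms unfolding plane_straight_def by (elim conjE; metis)+

lemma dual_setting_edge_endpoints:
  assumes "dual_setting V E Vp dl fv nu" "e \<in> E"
  shows "e \<subseteq> V" "card e = 2" "dl e \<subseteq> Vp" "card (dl e) = 2"
  using plane_straightD(1)[OF dual_settingD(1)[OF assms(1)] assms(2)]
    plane_straightD(1)[OF dual_settingD(2)[OF assms(1)]] assms(2) by blast+

lemma dual_setting_vertices_disjoint:
  assumes "dual_setting V E Vp dl fv nu"
  shows "V \<inter> Vp = {}"
proof -
  have "fv F \<notin> V" if "F \<in> faces V E" for F
  proof -
    have "F \<subseteq> ball 0 1 - drawing V E"
      using that unfolding faces_def by (rule in_components_subset)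
    then show ?thesis
      using dual_settingD(5)[OF assms that] unfolding drawing_def by blast
  qed
  then show ?thesis
    using dual_settingD(4)[OF assms] by blast
qed

lemma crossing_point_exists:
  assumes "dual_setting V E Vp dl fv nu" "e \<in> E"
  shows "\<exists>w. convex hull e \<inter> convex hull (dl e) = {w}"
proof -
  obtain p where p: "p \<in> edge_interior e" "p \<in> edge_interior (dl e)"
    "convex hull (dl e) \<inter> drawing V E = {p}"
    using dual_settingD(6)[OF assms] by blast
  have "convex hull e \<subseteq> drawing V E"
    using assms(2) unfolding drawing_def by blast
  then have "convex hull e \<inter> convex hull (dl e) = {p}"
    using p unfolding edge_interior_def by blast
  then show ?thesis ..
qed

lemma crossing_point_interior:
  assumes "dual_setting V E Vp dl fv nu" "e \<in> E" "convex hull e \<inter> convex hull (dl e) = {w}"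
  shows "w \<notin> e" "w \<notin> dl e" "convex hull (dl e) \<inter> drawing V E = {w}"
proof -
  obtain p where p: "p \<in> edge_interior e" "p \<in> edge_interior (dl e)"
    "convex hull (dl e) \<inter> drawing V E = {p}"
    using dual_settingD(6)[OF assms(1,2)] by blast
  moreover have "p = w"
    using p(1,2) assms(3) unfolding edge_interior_def by blast
  ultimately show "w \<notin> e" "w \<notin> dl e" "convex hull (dl e) \<inter> drawing V E = {w}"
    unfolding edge_interior_def by blast+
qed

lemma crossing_point_primal_edge_unique:
  assumes "dual_setting V E Vp dl fv nu" "e \<in> E" "convex hull e \<inter> convex hull (dl e) = {w}"
    and "f \<in> E" "w \<in> convex hull f"
  shows "f = e"
proof (rule ccontr)
  assume "f \<noteq> e"
  then have "w \<in> e"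
    using plane_straightD(2)[OF dual_settingD(1)[OF assms(1)] assms(2,4)] assms(3,5) by blast
  then show False
    using crossing_point_interior(1)[OF assms(1-3)] by contradiction
qed

lemma edges_through_crossing_point:
  assumes "dual_setting V E Vp dl fv nu" "e \<in> E" "convex hull e \<inter> convex hull (dl e) = {w}"
    and "f \<in> E \<union> dl ` E" "w \<in> convex hull f"
  shows "f = e \<or> f = dl e"
proof (cases "f \<in> E")
  case True
  then show ?thesis
    using crossing_point_primal_edge_unique[OF assms(1-3)] assms(5) by blast
next
  case False
  then obtain e' where e': "e' \<in> E" "f = dl e'"
    using assms(4) by blast
  obtain w' where w': "convex hull e' \<inter> convex hull (dl e') = {w'}"
    using crossing_point_exists[OF assms(1) e'(1)] by blast
  have "w \<in> drawing V E"
    using assms(2,3) unfolding drawing_def by blast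
  then have "w = w'"
    using crossing_point_interior(3)[OF assms(1) e'(1) w'] assms(5) e'(2) by blast
  then have "e' = e"
    using crossing_point_primal_edge_unique[OF assms(1-3) e'(1)] w' by blast
  then show ?thesis
    using e'(2) by blast
qed

lemma adjacent_black_is_endpoint:
  assumes "dual_setting V E Vp dl fv nu" "e \<in> E" "convex hull e \<inter> convex hull (dl e) = {w}"
    and "adj_wb E dl w b"
  shows "b \<in> e \<or> b \<in> dl e"
  using assms(4) edges_through_crossing_point[OF assms(1-3)] unfolding adj_wb_def by blast

lemma black_not_white:
  assumes "dual_setting V E Vp dl fv nu" "b \<in> V \<union> Vp"
  shows "b \<notin> whites E dl"
proof
  assume "b \<in> whites E dl"
  then obtain e where e: "e \<in> E" "convex hull e \<inter> convex hull (dl e) = {b}"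
    unfolding whites_def by blast
  then have "b \<in> convex hull e" "b \<in> convex hull (dl e)"
    by blast+
  then show False
    using assms(2) crossing_point_interior(1,2)[OF assms(1) e] e(1)
      plane_straightD(3)[OF dual_settingD(1)[OF assms(1)]]
      plane_straightD(3)[OF dual_settingD(2)[OF assms(1)]] by blast
qed

lemma dbar_at_crossing_point:
  assumes "dual_setting V E Vp dl fv nu" "e \<in> E" "convex hull e \<inter> convex hull (dl e) = {w}"
    and "f = e \<or> f = dl e" "b \<in> f"
  shows "dbar E dl nu w b = of_real (nu f) * sgn (b - w)"
    and "dbar E dl nu b w = of_real (nu f) * sgn (b - w)"
proof -
  note endpoints = dual_setting_edge_endpoints(1,3)[OF assms(1,2)]
  have f: "f \<in> E \<union> dl ` E" "w \<in> convex hull f"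
    using assms(2-4) by blast+
  have "adj_wb E dl w b"
    using assms(2,3,5) f unfolding adj_wb_def whites_def by blast
  moreover have "\<not> adj_wb E dl b w"
    using black_not_white[OF assms(1)] assms(4,5) endpoints unfolding adj_wb_def by blast
  moreover have "edge_wb E dl w b = f"
    unfolding edge_wb_def
  proof (rule the_equality)
    show "f \<in> E \<union> dl ` E \<and> b \<in> f \<and> w \<in> convex hull f"
      using f assms(5) by blast
  next
    fix g
    assume g: "g \<in> E \<union> dl ` E \<and> b \<in> g \<and> w \<in> convex hull g"
    then have "g = e \<or> g = dl e"
      using edges_through_crossing_point[OF assms(1-3)] by blast
    then show "g = f"
      using g assms(4,5) endpoints dual_setting_vertices_disjoint[OF assms(1)] by blast
  qed
  ultimately show "dbar E dl nu w b = of_real (nu f) * sgn (b - w)"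
    "dbar E dl nu b w = of_real (nu f) * sgn (b - w)"
    unfolding dbar_def by (simp_all add: sgn_eq)
qed

lemma right_angle_at_crossing_point:
  assumes "dual_setting V E Vp dl fv nu" "e \<in> E" "convex hull e \<inter> convex hull (dl e) = {w}"
    and "a \<in> e" "c \<in> dl e"
  shows "Re ((a - w) * cnj (c - w)) = 0"
proof -
  note cards = dual_setting_edge_endpoints(2,4)[OF assms(1,2)]
  obtain a' c' where "a' \<in> e" "a' \<noteq> a" "c' \<in> dl e" "c' \<noteq> c"
    using cards by (metis card_2_iff insertCI)
  then have edges: "e = {a, a'}" "dl e = {c, c'}"
    using assms(4,5) cards card_2_eq_doubleton by metis+
  have "w \<in> closed_segment a a'" "w \<in> closed_segment c c'"
    using assms(3) edges by (auto simp: segment_convex_hull)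
  then obtain u v where u: "w = (1 - u) *\<^sub>R a + u *\<^sub>R a'" and v: "w = (1 - v) *\<^sub>R c + v *\<^sub>R c'"
    unfolding in_segment by blast
  have "a - w = - (of_real u * (a' - a))"
    unfolding u by (simp add: scaleR_conv_of_real algebra_simps)
  moreover have "c - w = - (of_real v * (c' - c))"
    unfolding v by (simp add: scaleR_conv_of_real algebra_simps)
  ultimately have "(a - w) * cnj (c - w) = of_real (u * v) * ((a' - a) * cnj (c' - c))"
    by simp
  then have "Re ((a - w) * cnj (c - w)) = u * v * Re ((a' - a) * cnj (c' - c))"
    by simp
  also have "\<dots> = 0"
    using dual_settingD(7)[OF assms(1,2) edges] by simp
  finally show ?thesis .
qed

lemma crossing_segments_disjoint:
  assumes "dual_setting V E Vp dl fv nu" "e \<in> E" "e' \<in> E" "e \<noteq> e'"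
    and "convex hull e \<inter> convex hull (dl e) = {w}" "convex hull e' \<inter> convex hull (dl e') = {w'}"
    and "a \<in> e'" "c \<in> dl e"
  shows "closed_segment a w' \<inter> closed_segment w c = {}"
proof -
  have "a \<in> convex hull e'" "w' \<in> convex hull e'" "w \<in> convex hull (dl e)" "c \<in> convex hull (dl e)"
    using assms(5-8) by (auto intro: hull_inc)
  then have "closed_segment a w' \<subseteq> convex hull e'" "closed_segment w c \<subseteq> convex hull (dl e)"
    by (simp_all add: closed_segment_subset)
  moreover have "convex hull e' \<subseteq> drawing V E"
    using assms(3) unfolding drawing_def by blast
  ultimately have "closed_segment a w' \<inter> closed_segment w c \<subseteq> {w} \<inter> convex hull e'"
    using crossing_point_interior(3)[OF assms(1,2,5)] by blast
  also have "\<dots> = {}"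
    using crossing_point_primal_edge_unique[OF assms(1,2,5,3)] assms(4) by blast
  finally show ?thesis
    by blast
qed

lemma sgn_quotient_product:
  fixes x y z t :: complex
  assumes "p > 0" "q > 0" "r > 0" "s > 0" "x \<noteq> 0" "y \<noteq> 0" "z \<noteq> 0" "t \<noteq> 0"
  shows "\<exists>K>0. (of_real p * sgn x / (of_real q * sgn y)) * (of_real r * sgn z / (of_real s * sgn t))
           = of_real K * (x * z / (y * t))"
proof -
  define K where "K = p * r * cmod y * cmod t / (q * s * cmod x * cmod z)"
  have "K > 0"
    using assms by (simp add: K_def)
  moreover have "(of_real p * sgn x / (of_real q * sgn y)) * (of_real r * sgn z / (of_real s * sgn t))
           = of_real K * (x * z / (y * t))"
    using assms by (simp add: K_def sgn_eq field_simps)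
  ultimately show ?thesis
    by blast
qed

lemma dbar_corner_product_negative:
  assumes "dual_setting V E Vp dl fv nu" "e1 \<in> E" "e2 \<in> E" "e1 \<noteq> e2"
    and "convex hull e1 \<inter> convex hull (dl e1) = {w1}" "convex hull e2 \<inter> convex hull (dl e2) = {w2}"
    and "b \<in> e1" "b \<in> e2" "c \<in> dl e1" "c \<in> dl e2"
  shows "\<exists>r<0. (dbar E dl nu w1 b / dbar E dl nu b w2) * (dbar E dl nu w2 c / dbar E dl nu c w1)
           = of_real r"
proof -
  note crossing1 = assms(1,2,5) and crossing2 = assms(1,3,6)
  have "b \<noteq> c"
    using dual_setting_vertices_disjoint[OF assms(1)] assms(7,9)
      dual_setting_edge_endpoints(1,3)[OF assms(1,2)] by blast
  moreover have "w1 \<noteq> w2"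
    using crossing_point_primal_edge_unique[OF crossing1 assms(3)] assms(4,6) by blast
  moreover have "w1 \<notin> {b, c}" "w2 \<notin> {b, c}"
    using crossing_point_interior(1,2)[OF crossing1] crossing_point_interior(1,2)[OF crossing2]
      assms(7-10) by blast+
  moreover have "Re ((b - w1) * cnj (c - w1)) = 0" "Re ((b - w2) * cnj (c - w2)) = 0"
    using right_angle_at_crossing_point[OF crossing1 assms(7,9)]
      right_angle_at_crossing_point[OF crossing2 assms(8,10)] .
  moreover have "closed_segment b w1 \<inter> closed_segment w2 c = {}"
    "closed_segment b w2 \<inter> closed_segment w1 c = {}"
    using crossing_segments_disjoint[OF assms(1,3,2) assms(4)[symmetric] assms(6,5,7,10)]
      crossing_segments_disjoint[OF assms(1,2,3,4,5,6,8,9)] .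
  ultimately obtain r where "r < 0" "cross_ratio b c w1 w2 = of_real r"
    using cross_ratio_negative_if_right_angles by blast
  moreover have "nu e1 > 0" "nu e2 > 0" "nu (dl e2) > 0" "nu (dl e1) > 0"
    using dual_settingD(8)[OF assms(1)] assms(2,3) by blast+
  ultimately obtain K where "K > 0" and K:
    "(of_real (nu e1) * sgn (b - w1) / (of_real (nu e2) * sgn (b - w2))) *
     (of_real (nu (dl e2)) * sgn (c - w2) / (of_real (nu (dl e1)) * sgn (c - w1)))
       = of_real K * cross_ratio b c w1 w2"
    using sgn_quotient_product[of "nu e1" "nu e2" "nu (dl e2)" "nu (dl e1)"
        "b - w1" "b - w2" "c - w2" "c - w1"] \<open>w1 \<notin> {b, c}\<close> \<open>w2 \<notin> {b, c}\<close>
    unfolding cross_ratio_def by auto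
  have "dbar E dl nu w1 b = of_real (nu e1) * sgn (b - w1)"
    "dbar E dl nu b w2 = of_real (nu e2) * sgn (b - w2)"
    "dbar E dl nu w2 c = of_real (nu (dl e2)) * sgn (c - w2)"
    "dbar E dl nu c w1 = of_real (nu (dl e1)) * sgn (c - w1)"
    using dbar_at_crossing_point(1)[OF crossing1 disjI1[OF refl] assms(7)]
      dbar_at_crossing_point(2)[OF crossing2 disjI1[OF refl] assms(8)]
      dbar_at_crossing_point(1)[OF crossing2 disjI2[OF refl] assms(10)]
      dbar_at_crossing_point(2)[OF crossing1 disjI2[OF refl] assms(9)] .
  then show ?thesis
    using \<open>K > 0\<close> \<open>r < 0\<close> \<open>cross_ratio b c w1 w2 = of_real r\<close> K
    by (intro exI[of _ "K * r"]) (simp add: mult_pos_neg)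
qed

lemma adjacent_blacks_primal_dual:
  assumes "dual_setting V E Vp dl fv nu" "e1 \<in> E" "e2 \<in> E" "e1 \<noteq> e2" "b1 \<noteq> b2"
    and "b1 \<in> e1 \<or> b1 \<in> dl e1" "b1 \<in> e2 \<or> b1 \<in> dl e2"
    and "b2 \<in> e1 \<or> b2 \<in> dl e1" "b2 \<in> e2 \<or> b2 \<in> dl e2"
  obtains "b1 \<in> e1" "b1 \<in> e2" "b2 \<in> dl e1" "b2 \<in> dl e2"
    | "b2 \<in> e1" "b2 \<in> e2" "b1 \<in> dl e1" "b1 \<in> dl e2"
proof -
  note primal = dual_setting_edge_endpoints(1,2)[OF assms(1)]
    and dual = dual_setting_edge_endpoints(3,4)[OF assms(1)]
  have two: "A = B" if "card A = 2" "card B = 2" "b1 \<in> A" "b2 \<in> A" "b1 \<in> B" "b2 \<in> B"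
    for A B :: "complex set"
    using that assms(5) card_2_eq_doubleton by metis
  have side: "(b \<in> e1 \<and> b \<in> e2) \<or> (b \<in> dl e1 \<and> b \<in> dl e2)"
    if "b \<in> e1 \<or> b \<in> dl e1" "b \<in> e2 \<or> b \<in> dl e2" for b
    using that dual_setting_vertices_disjoint[OF assms(1)] primal(1) dual(1) assms(2,3) by blast
  have "\<not> (b1 \<in> e1 \<and> b1 \<in> e2 \<and> b2 \<in> e1 \<and> b2 \<in> e2)"
    using two[of e1 e2] primal(2) assms(2-4) by blast
  moreover have "\<not> (b1 \<in> dl e1 \<and> b1 \<in> dl e2 \<and> b2 \<in> dl e1 \<and> b2 \<in> dl e2)"
    using two[of "dl e1" "dl e2"] dual(2) assms(2-4) inj_onD[OF dual_settingD(3)[OF assms(1)]] by blast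
  ultimately show ?thesis
    using side[OF assms(6,7)] side[OF assms(8,9)] that by blast
qed

theorem lemma2p5:
  fixes V Vp :: "complex set" and E :: "complex set set"
    and dl :: "complex set \<Rightarrow> complex set" and fv :: "complex set \<Rightarrow> complex"
    and nu :: "complex set \<Rightarrow> real" and w1 b1 w2 b2 :: complex and Q :: "complex set"
  assumes "dual_setting V E Vp dl fv nu"
    and "Q \<in> gbar_faces V E Vp dl"
    and "w1 \<in> whites E dl" "w2 \<in> whites E dl"
    and "b1 \<in> V \<union> Vp" "b2 \<in> V \<union> Vp"
    and "w1 \<noteq> w2" "b1 \<noteq> b2"
    and "adj_wb E dl w1 b1" "adj_wb E dl w2 b1" "adj_wb E dl w2 b2" "adj_wb E dl w1 b2"
    and "frontier Q = closed_segment w1 b1 \<union> closed_segment b1 w2 \<union>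
                      closed_segment w2 b2 \<union> closed_segment b2 w1"
  shows "let z = - ((dbar E dl nu w1 b1 / dbar E dl nu b1 w2) *
                    (dbar E dl nu w2 b2 / dbar E dl nu b2 w1))
         in Im z = 0 \<and> Re z > 0"
proof -
  obtain e1 e2 where e1: "e1 \<in> E" "convex hull e1 \<inter> convex hull (dl e1) = {w1}"
    and e2: "e2 \<in> E" "convex hull e2 \<inter> convex hull (dl e2) = {w2}"
    using assms(3,4) unfolding whites_def by blast
  have "e1 \<noteq> e2"
    using assms(7) e1(2) e2(2) by auto
  obtain r where "r < 0" "(dbar E dl nu w1 b1 / dbar E dl nu b1 w2) *
                    (dbar E dl nu w2 b2 / dbar E dl nu b2 w1) = of_real r"
  proof (rule adjacent_blacks_primal_dual[OF assms(1) e1(1) e2(1) \<open>e1 \<noteq> e2\<close> assms(8)])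
    show "b1 \<in> e1 \<or> b1 \<in> dl e1" "b1 \<in> e2 \<or> b1 \<in> dl e2" "b2 \<in> e1 \<or> b2 \<in> dl e1" "b2 \<in> e2 \<or> b2 \<in> dl e2"
      using adjacent_black_is_endpoint[OF assms(1) e1] adjacent_black_is_endpoint[OF assms(1) e2]
        assms(9-12) by blast+
  next
    assume "b1 \<in> e1" "b1 \<in> e2" "b2 \<in> dl e1" "b2 \<in> dl e2"
    then show ?thesis
      using dbar_corner_product_negative[OF assms(1) e1(1) e2(1) \<open>e1 \<noteq> e2\<close> e1(2) e2(2)] that
      by blast
  next
    assume "b2 \<in> e1" "b2 \<in> e2" "b1 \<in> dl e1" "b1 \<in> dl e2"
    then show ?thesis
      using dbar_corner_product_negative[OF assms(1) e2(1) e1(1) \<open>e1 \<noteq> e2\<close>[symmetric] e2(2) e1(2)] that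
      by (metis mult.commute)
  qed
  then show ?thesis
    by simp
qed

end
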